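(* Let $n\in\mathbb{N}$, $\mathcal{H}=(\mathbb{C}^2)^{\otimes n}$ with computational basis $\{\lvert\bm b\rangle:\bm b\in\{0,1\}^n\}$, let $c:\{0,1\}^n\to\mathbb{R}$ and $\mathcal{S}\subseteq\{0,1\}^n$, let $C\in\mathcal{L}(\mathcal{H})$ be defined by $C\lvert\bm b\rangle=c(\bm b)\lvert\bm b\rangle$, let $\mathcal{H}_{\mathcal{S}}=\operatorname{span}\{\lvert\bm b\rangle:\bm b\in\mathcal{S}\}$ with orthogonal projection $P_{\mathcal{S}}$. Let $\lvert\iota\rangle\in\mathcal{H}_{\mathcal{S}}$ be a unit vector and let $U_1,\dots,U_\ell\in\mathcal{L}(\mathcal{H})$ be unitaries with $U_\ell=\mathbb{1}$ such that $\{U_j\lvert\iota\rangle:j=1,\dots,\ell\}$ is linearly independent. For $\bm\alpha\in\mathbb{C}^\ell$ put $M_{\bm\alpha}=\sum_{j=1}^\ell\alpha_jU_j$, and consider the problem \[ \min_{\bm\alpha\in\mathbb{C}^\ell}\ \langle\iota\rvert M_{\bm\alpha}^\dagger C M_{\bm\alpha}\lvert\iota\rangle\quad\text{s.t.}\quad \langle\iota\rvert M_{\bm\alpha}^\dagger M_{\bm\alpha}\lvert\iota\rangle=1,\quad \langle\iota\rvert M_{\bm\alpha}^\dagger(\mathbb{1}-P_{\mathcal{S}}) M_{\bm\alpha}\lvert\iota\rangle=0. \tag{P} \] Define $\mathbf F,\mathbf G,\mathbf H\in\mathbb{C}^{\ell\times\ell}$ by $\mathbf F_{jk}=\langle\iota\rvert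 U_j^\dagger U_k\lvert\iota\rangle$, $\mathbf G_{jk}=\langle\iota\rvert U_j^\dagger(\mathbb{1}-P_{\mathcal{S}})U_k\lvert\iota\rangle$, $\mathbf H_{jk}=\langle\iota\rvert U_j^\dagger C U_k\lvert\iota\rangle$, and the real symmetric $2\ell\times2\ell$ matrices \[ \bm F=\begin{pmatrix}\operatorname{Re}\mathbf F&-\operatorname{Im}\mathbf F\\ \operatorname{Im}\mathbf F&\operatorname{Re}\mathbf F\end{pmatrix},\ \bm G=\begin{pmatrix}\operatorname{Re}\mathbf G&-\operatorname{Im}\mathbf G\\ \operatorname{Im}\mathbf G&\operatorname{Re}\mathbf G\end{pmatrix},\ \bm H=\begin{pmatrix}\operatorname{Re}\mathbf H&-\operatorname{Im}\mathbf H\\ \operatorname{Im}\mathbf H&\operatorname{Re}\mathbf H\end{pmatrix}. \] Let $m=\dim\ker\bm G$ and let $\bm B_{\bm G}$ be a real orthogonal $2\ell\times2\ell$ matrix such that $\bm B_{\bm G}\bm G\bm B_{\bm G}^{-1}$ is diagonal with its first $m$ diagonal entries equal to $0$ (and the others nonzero). Let $\tilde{\bm F}$ and $\tilde{\bm H}$ be the upper-left $m\times m$ blocks of $\bm B_{\bm G}\bm F\bm B_{\bm G}^{-1}$ and $\bm B_{\bm G}\bm H\bm B_{\bm G}^{-1}$, respectively. Let $\lambda_0$ be the smallest generalized eigenvalue of the generalized eigenvalue problem $\tilde{\bm H}\bm x=\lambda\tilde{\bm F}\bm x$, $\bm x\in\mathbb{R}^m\setminus\{\bm 0\}$, and let $\bm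 x_0$ be an associated generalized eigenvector normalized so that $\bm x_0^{\top}\tilde{\bm F}\bm x_0=1$. Then the minimum of (P) equals $\lambda_0$, and a minimizer of (P) is \[ \bm\alpha_0=\big[\bm B_{\bm G}^{-1}(\bm x_0,0,\dots,0)\big]_{1,\dots,\ell}+i\,\big[\bm B_{\bm G}^{-1}(\bm x_0,0,\dots,0)\big]_{\ell+1,\dots,2\ell}, \] where $(\bm x_0,0,\dots,0)\in\mathbb{R}^{2\ell}$ is $\bm x_0$ padded with $2\ell-m$ zeros and $[\bm v]_{a,\dots,b}$ denotes the vector of entries $a$ through $b$ of $\bm v$.
   Context: $\mathcal{L}(\mathcal{H})$ denotes linear operators on $\mathcal{H}$; $\mathbb{1}$ is the identity. The data $(n,c,\mathcal{S})$ is a constrained combinatorial optimization problem with objective $c$ and feasible set $\mathcal{S}$. A generalized eigenvalue of the pair $(\tilde{\bm H},\tilde{\bm F})$ is a $\lambda\in\mathbb{R}$ for which there is a nonzero $\bm x$ with $\tilde{\bm H}\bm x=\lambda\tilde{\bm F}\bm x$. *)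

theory Defs
  imports "Jordan_Normal_Form.Matrix_Kernel" "Jordan_Normal_Form.Conjugate"
begin

(* Hilbert space H = (C^2)^{\<otimes> n} = C^(2^n); computational basis vector |b> for
   b \<in> {0,1}^n is the standard unit vector with index the number whose binary digits are b. *)

definition adj :: "complex mat \<Rightarrow> complex mat" where
  "adj A = map_mat cnj (transpose_mat A)"

definition braket :: "complex vec \<Rightarrow> complex mat \<Rightarrow> complex vec \<Rightarrow> complex" where
  "braket v A w = (\<Sum>i<dim_vec v. cnj (v $ i) * (A *\<^sub>v w) $ i)"

definition unitary_mat :: "nat \<Rightarrow> complex mat \<Rightarrow> bool" where
  "unitary_mat N U \<longleftrightarrow> U \<in> carrier_mat N N \<and> adj U * U = 1\<^sub>m N \<and> U * adj U = 1\<^sub>m N"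

definition cost_op :: "nat \<Rightarrow> (nat \<Rightarrow> real) \<Rightarrow> complex mat" where
  "cost_op N c = mat N N (\<lambda>(i,j). if i = j then complex_of_real (c i) else 0)"

definition proj_op :: "nat \<Rightarrow> nat set \<Rightarrow> complex mat" where
  "proj_op N S = mat N N (\<lambda>(i,j). if i = j \<and> i \<in> S then 1 else 0)"

definition Mop :: "nat \<Rightarrow> nat \<Rightarrow> (nat \<Rightarrow> complex mat) \<Rightarrow> complex vec \<Rightarrow> complex mat" where
  "Mop N l U \<alpha> = mat N N (\<lambda>(r,s). \<Sum>j<l. \<alpha> $ j * U j $$ (r,s))"

definition lin_indep_family :: "nat \<Rightarrow> (nat \<Rightarrow> complex vec) \<Rightarrow> nat \<Rightarrow> bool" where
  "lin_indep_family N v l \<longleftrightarrow>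
     (\<forall>a :: nat \<Rightarrow> complex. (\<forall>i<N. (\<Sum>j<l. a j * v j $ i) = 0) \<longrightarrow> (\<forall>j<l. a j = 0))"

definition gram :: "nat \<Rightarrow> (nat \<Rightarrow> complex mat) \<Rightarrow> complex vec \<Rightarrow> complex mat \<Rightarrow> complex mat" where
  "gram l U \<iota> A = mat l l (\<lambda>(j,k). braket \<iota> (adj (U j) * A * U k) \<iota>)"

definition realify :: "complex mat \<Rightarrow> real mat" where
  "realify X = four_block_mat (map_mat Re X) (map_mat (\<lambda>z. - Im z) X) (map_mat Im X) (map_mat Re X)"

definition upper_left :: "nat \<Rightarrow> real mat \<Rightarrow> real mat" where
  "upper_left m A = mat m m (\<lambda>(i,j). A $$ (i,j))"

definition gen_eigenvalue :: "nat \<Rightarrow> real mat \<Rightarrow> real mat \<Rightarrow> real \<Rightarrow> bool" where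
  "gen_eigenvalue m Ht Ft lam \<longleftrightarrow>
     (\<exists>x \<in> carrier_vec m. x \<noteq> 0\<^sub>v m \<and> Ht *\<^sub>v x = lam \<cdot>\<^sub>v (Ft *\<^sub>v x))"

definition feasible :: "nat \<Rightarrow> nat \<Rightarrow> nat set \<Rightarrow> (nat \<Rightarrow> complex mat) \<Rightarrow> complex vec \<Rightarrow> complex vec \<Rightarrow> bool" where
  "feasible N l S U \<iota> \<alpha> \<longleftrightarrow> \<alpha> \<in> carrier_vec l \<and>
     braket \<iota> (adj (Mop N l U \<alpha>) * Mop N l U \<alpha>) \<iota> = 1 \<and>
     braket \<iota> (adj (Mop N l U \<alpha>) * (1\<^sub>m N - proj_op N S) * Mop N l U \<alpha>) \<iota> = 0"

definition objective :: "nat \<Rightarrow> nat \<Rightarrow> (nat \<Rightarrow> real) \<Rightarrow> (nat \<Rightarrow> complex mat) \<Rightarrow> complex vec \<Rightarrow> complex vec \<Rightarrow> complex" where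
  "objective N l c U \<iota> \<alpha> = braket \<iota> (adj (Mop N l U \<alpha>) * cost_op N c * Mop N l U \<alpha>) \<iota>"

end

theory Submission
  imports Defs "HOL-Analysis.Function_Topology"
begin

text \<open>
  Write \<open>\<alpha> = y' + i y''\<close> with \<open>y = (y', y'') \<in> \<real>\<^bsup>2l\<^esup>\<close>. The operators \<open>\<one>\<close>, \<open>\<one> - P\<^sub>S\<close> and \<open>C\<close>
  are real diagonal, so each form \<open>\<langle>\<iota>| M\<^sub>\<alpha>\<^sup>\<dagger> A M\<^sub>\<alpha> |\<iota>\<rangle>\<close> equals \<open>\<Sum>\<^sub>p d\<^sub>p |(M\<^sub>\<alpha>\<iota>)\<^sub>p|\<^sup>2\<close>, which is
  \<open>y\<^sup>T X y\<close> for the realified Gram matrix \<open>X\<close> of \<open>A\<close>. Problem (P) thus becomes: minimise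
  \<open>y\<^sup>T H y\<close> subject to \<open>y\<^sup>T F y = 1\<close> and \<open>y\<^sup>T G y = 0\<close>, where \<open>G\<close> is positive semidefinite and
  \<open>F\<close> is positive definite by the linear independence of the \<open>U\<^sub>j \<iota>\<close>.

  As \<open>B G B\<^sup>T\<close> is diagonal with nonnegative entries that vanish exactly in the first \<open>m\<close>
  positions, \<open>y\<^sup>T G y = 0\<close> holds iff \<open>y = B\<^sup>T (x, 0)\<close>, and for such \<open>y\<close> the forms of \<open>F\<close> and \<open>H\<close>
  are those of \<open>Ft\<close> and \<open>Ht\<close> at \<open>x\<close>. It remains to see that \<open>\<lambda>\<^sub>0 x\<^sup>T Ft x \<le> x\<^sup>T Ht x\<close>: the
  Rayleigh quotient \<open>x\<^sup>T Ht x / x\<^sup>T Ft x\<close> attains its minimum \<open>\<mu>\<close> on the compact unit sphere,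
  \<open>Ht - \<mu> Ft\<close> is then positive semidefinite with a null vector at the minimiser, which is
  therefore a generalised eigenvector, so \<open>\<lambda>\<^sub>0 \<le> \<mu>\<close>; and \<open>x\<^sub>0\<close> attains \<open>\<lambda>\<^sub>0\<close>.
\<close>

section \<open>Rayleigh quotients of real quadratic forms\<close>

text \<open>Vectors of \<open>\<real>\<^sup>m\<close> are represented here by functions \<open>nat \<Rightarrow> real\<close>, of which only the values
  below \<open>m\<close> matter, so that compactness of the unit sphere can be taken from the product topology.\<close>

definition quad_form :: "nat \<Rightarrow> (nat \<Rightarrow> nat \<Rightarrow> real) \<Rightarrow> (nat \<Rightarrow> real) \<Rightarrow> real" where
  "quad_form m h x = (\<Sum>i<m. \<Sum>j<m. x i * h i j * x j)"

lemma quad_form_cong: "(\<And>i. i < m \<Longrightarrow> x i = y i) \<Longrightarrow> quad_form m h x = quad_form m h y"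
  unfolding quad_form_def by (intro sum.cong refl) auto

lemma quad_form_coeff_cong:
  "(\<And>i j. i < m \<Longrightarrow> j < m \<Longrightarrow> h i j = h' i j) \<Longrightarrow> quad_form m h x = quad_form m h' x"
  unfolding quad_form_def by (intro sum.cong refl) auto

lemma quad_form_scale: "quad_form m h (\<lambda>i. r * x i) = r\<^sup>2 * quad_form m h x"
  unfolding quad_form_def by (simp add: sum_distrib_left power2_eq_square mult_ac)

lemma quad_form_add:
  assumes "\<And>i j. i < m \<Longrightarrow> j < m \<Longrightarrow> h i j = h j i"
  shows "quad_form m h (\<lambda>i. x i + y i)
    = quad_form m h x + 2 * (\<Sum>i<m. \<Sum>j<m. y i * h i j * x j) + quad_form m h y"
proof -
  have "(\<Sum>i<m. \<Sum>j<m. x i * h i j * y j) = (\<Sum>j<m. \<Sum>i<m. x i * h i j * y j)"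
    by (rule sum.swap)
  also have "\<dots> = (\<Sum>i<m. \<Sum>j<m. y i * h i j * x j)"
    using assms by (intro sum.cong refl) (simp add: mult_ac)
  finally show ?thesis
    unfolding quad_form_def by (simp add: algebra_simps sum.distrib)
qed

lemma quad_form_zero_extend:
  assumes "m \<le> n" and "\<And>i. m \<le> i \<Longrightarrow> i < n \<Longrightarrow> x i = 0"
  shows "quad_form n h x = quad_form m h x"
proof -
  have sub: "{..<m} \<subseteq> {..<n}" using \<open>m \<le> n\<close> by auto
  have "(\<Sum>j<n. x i * h i j * x j) = (\<Sum>j<m. x i * h i j * x j)" for i
    by (rule sum.mono_neutral_right[OF finite_lessThan sub]) (use assms in auto)
  moreover have "(\<Sum>i<n. \<Sum>j<m. x i * h i j * x j) = (\<Sum>i<m. \<Sum>j<m. x i * h i j * x j)"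
    by (rule sum.mono_neutral_right[OF finite_lessThan sub]) (use assms in auto)
  ultimately show ?thesis
    by (simp add: quad_form_def)
qed

lemma continuous_map_quad_form:
  "continuous_map (powertop_real {..<m}) euclideanreal (quad_form m h)"
  unfolding quad_form_def[abs_def]
  by (intro continuous_map_sum continuous_map_real_mult continuous_map_real_mult_right
      continuous_map_product_projection[where X="\<lambda>_. euclideanreal", simplified]) auto

definition unit_sphere_fun :: "nat \<Rightarrow> (nat \<Rightarrow> real) set" where
  "unit_sphere_fun m = {x \<in> {..<m} \<rightarrow>\<^sub>E UNIV. (\<Sum>i<m. (x i)\<^sup>2) = 1}"

lemma square_le_sum_squares:
  fixes x :: "nat \<Rightarrow> real"
  shows "i < m \<Longrightarrow> (x i)\<^sup>2 \<le> (\<Sum>j<m. (x j)\<^sup>2)"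
  by (rule member_le_sum[where f="\<lambda>j. (x j)\<^sup>2"]) auto

lemma compactin_unit_sphere_fun: "compactin (powertop_real {..<m}) (unit_sphere_fun m)"
proof (rule closed_compactin)
  show "compactin (powertop_real {..<m}) (PiE {..<m} (\<lambda>_. {-1..1}))"
    by (simp add: compactin_PiE)
  show "unit_sphere_fun m \<subseteq> PiE {..<m} (\<lambda>_. {-1..1})"
  proof (intro subsetI PiE_I)
    fix x i assume x: "x \<in> unit_sphere_fun m" and i: "i \<in> {..<m}"
    have "(x i)\<^sup>2 \<le> (\<Sum>i<m. (x i)\<^sup>2)"
      using i by (simp add: square_le_sum_squares)
    with x have "\<bar>x i\<bar> \<le> 1"
      by (simp add: unit_sphere_fun_def abs_square_le_1)
    then show "x i \<in> {-1..1}" by auto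
  qed (auto simp: unit_sphere_fun_def extensional_def)
  have "continuous_map (powertop_real {..<m}) euclideanreal (\<lambda>x. \<Sum>i<m. (x i)\<^sup>2)"
    by (intro continuous_map_sum continuous_map_real_pow
        continuous_map_product_projection[where X="\<lambda>_. euclideanreal", simplified]) auto
  then have "closedin (powertop_real {..<m})
      {x \<in> topspace (powertop_real {..<m}). (\<Sum>i<m. (x i)\<^sup>2) \<in> {1}}"
    by (rule closedin_continuous_map_preimage) simp
  then show "closedin (powertop_real {..<m}) (unit_sphere_fun m)"
    by (simp add: unit_sphere_fun_def topspace_product_topology)
qed

lemma unit_sphere_fun_nonzero: "x \<in> unit_sphere_fun m \<Longrightarrow> \<exists>i<m. x i \<noteq> 0"
  by (force simp: unit_sphere_fun_def)

lemma scale_into_unit_sphere_fun: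
  fixes x :: "nat \<Rightarrow> real"
  assumes "\<exists>i<m. x i \<noteq> 0"
  obtains r where "0 < r" and "restrict (\<lambda>i. r * x i) {..<m} \<in> unit_sphere_fun m"
proof
  obtain i where "i < m" "x i \<noteq> 0"
    using assms by blast
  have "0 < (x i)\<^sup>2" using \<open>x i \<noteq> 0\<close> by simp
  also have "\<dots> \<le> (\<Sum>i<m. (x i)\<^sup>2)" using \<open>i < m\<close> by (rule square_le_sum_squares)
  finally have pos: "0 < (\<Sum>i<m. (x i)\<^sup>2)" .
  then show "0 < inverse (sqrt (\<Sum>i<m. (x i)\<^sup>2))"
    by simp
  have "(\<Sum>i<m. (restrict (\<lambda>i. inverse (sqrt (\<Sum>i<m. (x i)\<^sup>2)) * x i) {..<m} i)\<^sup>2)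
      = (\<Sum>i<m. (x i)\<^sup>2 / (\<Sum>i<m. (x i)\<^sup>2))"
    using pos by (intro sum.cong) (simp_all add: power_mult_distrib power_inverse divide_inverse_commute)
  also have "\<dots> = 1"
    using pos by (simp add: sum_divide_distrib[symmetric])
  finally show "restrict (\<lambda>i. inverse (sqrt (\<Sum>i<m. (x i)\<^sup>2)) * x i) {..<m} \<in> unit_sphere_fun m"
    by (simp add: unit_sphere_fun_def)
qed

lemma quad_form_ratio_attains_min:
  fixes h f :: "nat \<Rightarrow> nat \<Rightarrow> real"
  assumes "0 < m" and f_pos: "\<And>x. \<exists>i<m. x i \<noteq> 0 \<Longrightarrow> 0 < quad_form m f x"
  obtains xs where "\<exists>i<m. xs i \<noteq> 0"
    and "\<And>x. \<exists>i<m. x i \<noteq> 0 \<Longrightarrow>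
      quad_form m h xs / quad_form m f xs \<le> quad_form m h x / quad_form m f x"
proof -
  define R where "R x = quad_form m h x / quad_form m f x" for x
  have "continuous_map (subtopology (powertop_real {..<m}) (unit_sphere_fun m)) euclideanreal R"
    unfolding R_def
  proof (intro continuous_map_real_divide continuous_map_from_subtopology continuous_map_quad_form)
    fix x assume "x \<in> topspace (subtopology (powertop_real {..<m}) (unit_sphere_fun m))"
    then have "x \<in> unit_sphere_fun m"
      by simp
    then show "quad_form m f x \<noteq> 0"
      using unit_sphere_fun_nonzero f_pos by (metis less_irrefl)
  qed
  moreover have "compactin (subtopology (powertop_real {..<m}) (unit_sphere_fun m)) (unit_sphere_fun m)"
    by (simp add: compactin_subtopology compactin_unit_sphere_fun)
  ultimately have "compact (R ` unit_sphere_fun m)"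
    using image_compactin compactin_euclidean_iff by blast
  moreover obtain r where "restrict (\<lambda>_. r * 1) {..<m} \<in> unit_sphere_fun m"
    using scale_into_unit_sphere_fun[of m "\<lambda>_. 1"] \<open>0 < m\<close> by auto
  then have "unit_sphere_fun m \<noteq> {}"
    by blast
  ultimately obtain xs where xs: "xs \<in> unit_sphere_fun m"
    and xs_min: "\<And>y. y \<in> unit_sphere_fun m \<Longrightarrow> R xs \<le> R y"
    using compact_attains_inf[of "R ` unit_sphere_fun m"] by blast
  show thesis
  proof (rule that)
    show "\<exists>i<m. xs i \<noteq> 0"
      using xs by (rule unit_sphere_fun_nonzero)
    fix x :: "nat \<Rightarrow> real" assume "\<exists>i<m. x i \<noteq> 0"
    then obtain r where "0 < r" and y: "restrict (\<lambda>i. r * x i) {..<m} \<in> unit_sphere_fun m"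
      by (rule scale_into_unit_sphere_fun)
    have "quad_form m g (restrict (\<lambda>i. r * x i) {..<m}) = r\<^sup>2 * quad_form m g x" for g
      using quad_form_cong[of m _ "\<lambda>i. r * x i" g] quad_form_scale[of m g r x] by simp
    with \<open>0 < r\<close> have "R (restrict (\<lambda>i. r * x i) {..<m}) = R x"
      by (simp add: R_def)
    with xs_min[OF y] show "quad_form m h xs / quad_form m f xs \<le> quad_form m h x / quad_form m f x"
      by (simp add: R_def)
  qed
qed

lemma nonneg_quadratic_imp_linear_coeff_zero:
  fixes a b :: real
  assumes "\<And>t. 0 \<le> t * a + t\<^sup>2 * b"
  shows "a = 0"
proof (rule ccontr)
  assume "a \<noteq> 0"
  define c where "c = \<bar>b\<bar> + 1"
  define t where "t = - a / c"
  have "0 < c" by (simp add: c_def add_nonneg_pos)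
  have "t * a + t\<^sup>2 * b \<le> t * a + t\<^sup>2 * (c - 1)"
    by (simp add: c_def mult_left_mono)
  also have "\<dots> = - (a / c)\<^sup>2"
    using \<open>0 < c\<close> by (simp add: t_def field_simps power2_eq_square)
  also have "\<dots> < 0"
    using \<open>a \<noteq> 0\<close> \<open>0 < c\<close> by simp
  finally show False
    using assms[of t] by simp
qed

lemma psd_quad_form_zero_imp_mult_eq_0:
  fixes k :: "nat \<Rightarrow> nat \<Rightarrow> real"
  assumes sym: "\<And>i j. i < m \<Longrightarrow> j < m \<Longrightarrow> k i j = k j i"
    and psd: "\<And>x. 0 \<le> quad_form m k x" and zero: "quad_form m k xs = 0"
    and "i < m"
  shows "(\<Sum>j<m. k i j * xs j) = 0"
proof -
  define u where "u i = (\<Sum>j<m. k i j * xs j)" for i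
  \<comment> \<open>\<open>0 \<le> q(xs + t u) = 2 t |u|\<^sup>2 + t\<^sup>2 q(u)\<close> for all \<open>t\<close> forces \<open>u = 0\<close>\<close>
  have cross: "(\<Sum>i<m. \<Sum>j<m. t * u i * k i j * xs j) = t * (\<Sum>i<m. (u i)\<^sup>2)" for t
  proof -
    have "(\<Sum>j<m. t * u i * k i j * xs j) = t * (u i)\<^sup>2" for i
      by (simp add: u_def[of i] sum_distrib_left power2_eq_square mult_ac)
    then show ?thesis by (simp add: sum_distrib_left)
  qed
  have "quad_form m k (\<lambda>i. xs i + t * u i) = t * (2 * (\<Sum>i<m. (u i)\<^sup>2)) + t\<^sup>2 * quad_form m k u"
    for t
    using quad_form_add[OF sym, where x = xs and y = "\<lambda>i. t * u i"]
    by (simp add: zero cross quad_form_scale)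
  then have "0 \<le> t * (2 * (\<Sum>i<m. (u i)\<^sup>2)) + t\<^sup>2 * quad_form m k u" for t
    using psd by metis
  then have "2 * (\<Sum>i<m. (u i)\<^sup>2) = 0"
    by (rule nonneg_quadratic_imp_linear_coeff_zero)
  then have "(u i)\<^sup>2 = 0"
    using \<open>i < m\<close> by (simp add: sum_nonneg_eq_0_iff)
  then show ?thesis
    by (simp add: u_def)
qed

lemma rayleigh_quotient_min_gen_eigenvector:
  fixes h f :: "nat \<Rightarrow> nat \<Rightarrow> real"
  assumes "0 < m" and f_pos: "\<And>x. \<exists>i<m. x i \<noteq> 0 \<Longrightarrow> 0 < quad_form m f x"
    and h_sym: "\<And>i j. i < m \<Longrightarrow> j < m \<Longrightarrow> h i j = h j i"
    and f_sym: "\<And>i j. i < m \<Longrightarrow> j < m \<Longrightarrow> f i j = f j i"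
  obtains xs \<mu> where "\<exists>i<m. xs i \<noteq> 0"
    and "\<And>i. i < m \<Longrightarrow> (\<Sum>j<m. h i j * xs j) = \<mu> * (\<Sum>j<m. f i j * xs j)"
    and "\<And>x. \<mu> * quad_form m f x \<le> quad_form m h x"
proof -
  obtain xs where xs_nonzero: "\<exists>i<m. xs i \<noteq> 0" and xs_min:
    "\<And>x. \<exists>i<m. x i \<noteq> 0 \<Longrightarrow> quad_form m h xs / quad_form m f xs \<le> quad_form m h x / quad_form m f x"
    using quad_form_ratio_attains_min[OF \<open>0 < m\<close> f_pos] by blast
  define \<mu> where "\<mu> = quad_form m h xs / quad_form m f xs"
  have below: "\<mu> * quad_form m f x \<le> quad_form m h x" for x
  proof (cases "\<exists>i<m. x i \<noteq> 0")
    case True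
    with xs_min f_pos show ?thesis by (simp add: \<mu>_def pos_le_divide_eq)
  next
    case False
    then show ?thesis by (simp add: quad_form_def)
  qed
  define k where "k i j = h i j - \<mu> * f i j" for i j
  have quad_k: "quad_form m k x = quad_form m h x - \<mu> * quad_form m f x" for x
    by (simp add: quad_form_def k_def algebra_simps sum_subtractf sum_distrib_left)
  have "(\<Sum>j<m. k i j * xs j) = 0" if "i < m" for i
  proof (rule psd_quad_form_zero_imp_mult_eq_0[OF _ _ _ that])
    show "k i j = k j i" if "i < m" "j < m" for i j
      using that h_sym f_sym by (simp add: k_def)
    show "0 \<le> quad_form m k x" for x
      using below[of x] by (simp add: quad_k)
    show "quad_form m k xs = 0"
      using f_pos[OF xs_nonzero] by (simp add: quad_k \<mu>_def)
  qed
  then have eig: "(\<Sum>j<m. h i j * xs j) = \<mu> * (\<Sum>j<m. f i j * xs j)" if "i < m" for i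
    using that by (simp add: k_def algebra_simps sum_subtractf sum_distrib_left)
  show thesis by (rule that[OF xs_nonzero eig below])
qed

lemma scalar_prod_mult_mat_vec_eq_quad_form:
  fixes A :: "real mat"
  assumes "A \<in> carrier_mat n n" and "x \<in> carrier_vec n"
  shows "x \<bullet> (A *\<^sub>v x) = quad_form n (\<lambda>i j. A $$ (i, j)) (\<lambda>i. x $ i)"
  using assms by (simp add: quad_form_def scalar_prod_def sum_distrib_left mult.assoc atLeast0LessThan)

lemma symmetric_mat_index:
  assumes "A \<in> carrier_mat n n" and "transpose_mat A = A" and "i < n" and "j < n"
  shows "A $$ (i, j) = A $$ (j, i)"
proof -
  have "A $$ (i, j) = transpose_mat A $$ (j, i)"
    using assms(1,3,4) by (simp add: carrier_matD)
  then show ?thesis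
    using assms(2) by simp
qed

lemma exists_gen_eigenvalue_below_rayleigh_quotient:
  fixes Ht Ft :: "real mat"
  assumes "0 < m" and Ht: "Ht \<in> carrier_mat m m" and Ft: "Ft \<in> carrier_mat m m"
    and "transpose_mat Ht = Ht" "transpose_mat Ft = Ft"
    and Ft_pos: "\<And>x. x \<in> carrier_vec m \<Longrightarrow> x \<noteq> 0\<^sub>v m \<Longrightarrow> 0 < x \<bullet> (Ft *\<^sub>v x)"
  obtains \<mu> where "gen_eigenvalue m Ht Ft \<mu>"
    and "\<And>x. x \<in> carrier_vec m \<Longrightarrow> \<mu> * (x \<bullet> (Ft *\<^sub>v x)) \<le> x \<bullet> (Ht *\<^sub>v x)"
proof -
  have nonzero: "vec m x \<noteq> 0\<^sub>v m" if "\<exists>i<m. x i \<noteq> 0" for x :: "nat \<Rightarrow> real"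
    using that by (auto simp: vec_eq_iff)
  have Ft_quad_pos: "0 < quad_form m (\<lambda>i j. Ft $$ (i, j)) x" if "\<exists>i<m. x i \<noteq> 0" for x
  proof -
    have "0 < vec m x \<bullet> (Ft *\<^sub>v vec m x)"
      using nonzero[OF that] by (simp add: Ft_pos)
    also have "\<dots> = quad_form m (\<lambda>i j. Ft $$ (i, j)) (\<lambda>i. vec m x $ i)"
      by (rule scalar_prod_mult_mat_vec_eq_quad_form[OF Ft]) simp
    also have "\<dots> = quad_form m (\<lambda>i j. Ft $$ (i, j)) x"
      by (rule quad_form_cong) simp
    finally show ?thesis .
  qed
  show thesis
  proof (rule rayleigh_quotient_min_gen_eigenvector[where h = "\<lambda>i j. Ht $$ (i, j)"
        and f = "\<lambda>i j. Ft $$ (i, j)", OF \<open>0 < m\<close> Ft_quad_pos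
        symmetric_mat_index[OF Ht \<open>transpose_mat Ht = Ht\<close>]
        symmetric_mat_index[OF Ft \<open>transpose_mat Ft = Ft\<close>]])
    fix xs \<mu>
    assume "\<exists>i<m. xs i \<noteq> 0"
      and eig: "\<And>i. i < m \<Longrightarrow> (\<Sum>j<m. Ht $$ (i, j) * xs j) = \<mu> * (\<Sum>j<m. Ft $$ (i, j) * xs j)"
      and below: "\<And>x. \<mu> * quad_form m (\<lambda>i j. Ft $$ (i, j)) x \<le> quad_form m (\<lambda>i j. Ht $$ (i, j)) x"
    show thesis
    proof (rule that)
      show "gen_eigenvalue m Ht Ft \<mu>"
        unfolding gen_eigenvalue_def
      proof (intro bexI conjI)
        show "vec m xs \<noteq> 0\<^sub>v m"
          by (rule nonzero) fact
        show "Ht *\<^sub>v vec m xs = \<mu> \<cdot>\<^sub>v (Ft *\<^sub>v vec m xs)"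
          using Ht Ft eig by (intro eq_vecI) (simp_all add: scalar_prod_def row_def atLeast0LessThan)
      qed simp
      show "\<mu> * (x \<bullet> (Ft *\<^sub>v x)) \<le> x \<bullet> (Ht *\<^sub>v x)" if "x \<in> carrier_vec m" for x
        using below[of "\<lambda>i. x $ i"]
        by (simp only: scalar_prod_mult_mat_vec_eq_quad_form[OF Ft that]
            scalar_prod_mult_mat_vec_eq_quad_form[OF Ht that])
    qed
  qed
qed

lemma min_gen_eigenvalue_le_rayleigh_quotient:
  fixes Ht Ft :: "real mat"
  assumes "0 < m" and "Ht \<in> carrier_mat m m" and "Ft \<in> carrier_mat m m"
    and "transpose_mat Ht = Ht" "transpose_mat Ft = Ft"
    and Ft_pos: "\<And>x. x \<in> carrier_vec m \<Longrightarrow> x \<noteq> 0\<^sub>v m \<Longrightarrow> 0 < x \<bullet> (Ft *\<^sub>v x)"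
    and lam_min: "\<And>\<mu>. gen_eigenvalue m Ht Ft \<mu> \<Longrightarrow> lam \<le> \<mu>"
    and x: "x \<in> carrier_vec m"
  shows "lam * (x \<bullet> (Ft *\<^sub>v x)) \<le> x \<bullet> (Ht *\<^sub>v x)"
proof (rule exists_gen_eigenvalue_below_rayleigh_quotient[OF assms(1-6)])
  fix \<mu> assume "gen_eigenvalue m Ht Ft \<mu>"
    and below: "\<And>x. x \<in> carrier_vec m \<Longrightarrow> \<mu> * (x \<bullet> (Ft *\<^sub>v x)) \<le> x \<bullet> (Ht *\<^sub>v x)"
  have "0 \<le> x \<bullet> (Ft *\<^sub>v x)"
    using Ft_pos[OF x] assms(3) by (cases "x = 0\<^sub>v m") (auto simp: less_imp_le)
  then have "lam * (x \<bullet> (Ft *\<^sub>v x)) \<le> \<mu> * (x \<bullet> (Ft *\<^sub>v x))"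
    using lam_min[OF \<open>gen_eigenvalue m Ht Ft \<mu>\<close>] by (rule mult_right_mono[rotated])
  also have "\<dots> \<le> x \<bullet> (Ht *\<^sub>v x)"
    using below[OF x] .
  finally show ?thesis .
qed

section \<open>Orthogonal congruence and leading principal blocks\<close>

lemma transpose_mult_mat_vec_cancel:
  fixes B :: "'a::comm_ring_1 mat"
  assumes "B \<in> carrier_mat n n" and "transpose_mat B * B = 1\<^sub>m n" and "z \<in> carrier_vec n"
  shows "transpose_mat B *\<^sub>v (B *\<^sub>v z) = z"
  using assms by (simp add: assoc_mult_mat_vec[symmetric, of _ n n _ n])

lemma scalar_prod_congruence:
  fixes B X :: "real mat"
  assumes B: "B \<in> carrier_mat n n" and X: "X \<in> carrier_mat n n" and z: "z \<in> carrier_vec n"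
  shows "z \<bullet> ((B * X * transpose_mat B) *\<^sub>v z)
    = (transpose_mat B *\<^sub>v z) \<bullet> (X *\<^sub>v (transpose_mat B *\<^sub>v z))"
proof -
  have "(B * X * transpose_mat B) *\<^sub>v z = B *\<^sub>v (X *\<^sub>v (transpose_mat B *\<^sub>v z))"
    using B X z by (simp add: assoc_mult_mat_vec[of _ n n _ n])
  then show ?thesis
    using B X z by (simp add: transpose_vec_mult_scalar[of B n n])
qed

lemma transpose_congruence:
  fixes B R :: "'a::comm_ring_1 mat"
  assumes B: "B \<in> carrier_mat n n" and R: "R \<in> carrier_mat n n" and "transpose_mat R = R"
  shows "transpose_mat (B * R * transpose_mat B) = B * R * transpose_mat B"
proof -
  have "transpose_mat (B * R * transpose_mat B) = transpose_mat (transpose_mat B) * transpose_mat (B * R)"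
    using B R by (intro transpose_mult[of _ n n]) auto
  also have "\<dots> = B * (transpose_mat R * transpose_mat B)"
    using transpose_mult[OF B R] by simp
  also have "\<dots> = B * R * transpose_mat B"
    using B R \<open>transpose_mat R = R\<close> by (simp add: assoc_mult_mat[of B n n R n])
  finally show ?thesis .
qed

lemma upper_left_carrier [simp]: "upper_left m A \<in> carrier_mat m m"
  by (simp add: upper_left_def)

definition zero_pad :: "nat \<Rightarrow> nat \<Rightarrow> 'a::zero vec \<Rightarrow> 'a vec" where
  "zero_pad n m x = vec n (\<lambda>i. if i < m then x $ i else 0)"

lemma zero_pad_carrier [simp]: "zero_pad n m x \<in> carrier_vec n"
  by (simp add: zero_pad_def)

lemma scalar_prod_zero_pad:
  fixes Q :: "real mat"
  assumes Q: "Q \<in> carrier_mat n n" and x: "x \<in> carrier_vec m" and "m \<le> n"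
  shows "zero_pad n m x \<bullet> (Q *\<^sub>v zero_pad n m x) = x \<bullet> (upper_left m Q *\<^sub>v x)"
proof -
  have "zero_pad n m x \<bullet> (Q *\<^sub>v zero_pad n m x)
      = quad_form n (\<lambda>i j. Q $$ (i, j)) (\<lambda>i. zero_pad n m x $ i)"
    using Q by (simp add: scalar_prod_mult_mat_vec_eq_quad_form)
  also have "\<dots> = quad_form m (\<lambda>i j. Q $$ (i, j)) (\<lambda>i. zero_pad n m x $ i)"
    using \<open>m \<le> n\<close> by (intro quad_form_zero_extend) (simp_all add: zero_pad_def)
  also have "\<dots> = quad_form m (\<lambda>i j. upper_left m Q $$ (i, j)) (\<lambda>i. x $ i)"
    using \<open>m \<le> n\<close> by (intro trans[OF quad_form_coeff_cong quad_form_cong])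
      (auto simp: upper_left_def zero_pad_def)
  also have "\<dots> = x \<bullet> (upper_left m Q *\<^sub>v x)"
    by (rule scalar_prod_mult_mat_vec_eq_quad_form[symmetric, OF upper_left_carrier x])
  finally show ?thesis .
qed

lemma scalar_prod_zero_pad_congruence:
  fixes B R :: "real mat"
  assumes "B \<in> carrier_mat n n" and "R \<in> carrier_mat n n" and "x \<in> carrier_vec m" and "m \<le> n"
  shows "(transpose_mat B *\<^sub>v zero_pad n m x) \<bullet> (R *\<^sub>v (transpose_mat B *\<^sub>v zero_pad n m x))
    = x \<bullet> (upper_left m (B * R * transpose_mat B) *\<^sub>v x)"
  using assms by (simp add: scalar_prod_congruence[symmetric] scalar_prod_zero_pad)

lemma scalar_prod_diagonal_mat:
  fixes D :: "real mat"
  assumes D: "D \<in> carrier_mat n n" and "diagonal_mat D" and z: "z \<in> carrier_vec n"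
  shows "z \<bullet> (D *\<^sub>v z) = (\<Sum>i<n. D $$ (i, i) * (z $ i)\<^sup>2)"
proof -
  have "(\<Sum>j<n. z $ i * D $$ (i, j) * z $ j) = D $$ (i, i) * (z $ i)\<^sup>2" if "i < n" for i
  proof -
    have "(\<Sum>j<n. z $ i * D $$ (i, j) * z $ j) = (\<Sum>j\<in>{i}. z $ i * D $$ (i, j) * z $ j)"
      using that D \<open>diagonal_mat D\<close> by (intro sum.mono_neutral_right) (auto simp: diagonal_mat_def)
    then show ?thesis by (simp add: power2_eq_square)
  qed
  then show ?thesis
    using D z by (simp add: scalar_prod_mult_mat_vec_eq_quad_form quad_form_def)
qed

lemma transpose_upper_left:
  assumes "A \<in> carrier_mat n n" and "m \<le> n"
  shows "transpose_mat (upper_left m A) = upper_left m (transpose_mat A)"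
  using assms by (intro eq_matI) (auto simp: upper_left_def)

lemma zero_pad_eq_zero_iff:
  assumes "x \<in> carrier_vec m" and "m \<le> n"
  shows "zero_pad n m x = 0\<^sub>v n \<longleftrightarrow> x = 0\<^sub>v m"
  using assms by (auto simp: zero_pad_def vec_eq_iff)

lemma pos_def_upper_left_congruence:
  fixes F B :: "real mat"
  assumes F: "F \<in> carrier_mat n n" and B: "B \<in> carrier_mat n n"
    and B_orth: "B * transpose_mat B = 1\<^sub>m n" and "m \<le> n"
    and F_pos: "\<forall>y\<in>carrier_vec n. y \<noteq> 0\<^sub>v n \<longrightarrow> 0 < y \<bullet> (F *\<^sub>v y)"
    and x: "x \<in> carrier_vec m" and "x \<noteq> 0\<^sub>v m"
  shows "0 < x \<bullet> (upper_left m (B * F * transpose_mat B) *\<^sub>v x)"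
proof -
  define y where "y = transpose_mat B *\<^sub>v zero_pad n m x"
  have "y \<in> carrier_vec n"
    using B by (simp add: y_def)
  have "B *\<^sub>v y = zero_pad n m x"
    using transpose_mult_mat_vec_cancel[of "transpose_mat B" n] B B_orth by (simp add: y_def)
  moreover have "zero_pad n m x \<noteq> 0\<^sub>v n"
    using x \<open>x \<noteq> 0\<^sub>v m\<close> \<open>m \<le> n\<close> by (simp add: zero_pad_eq_zero_iff)
  moreover have "B *\<^sub>v 0\<^sub>v n = 0\<^sub>v n"
    using B by (intro eq_vecI) (auto simp: scalar_prod_def)
  ultimately have "y \<noteq> 0\<^sub>v n"
    by auto
  with \<open>y \<in> carrier_vec n\<close> have "0 < y \<bullet> (F *\<^sub>v y)"
    using F_pos by blast
  then show ?thesis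
    using scalar_prod_zero_pad_congruence[OF B F x \<open>m \<le> n\<close>] by (simp add: y_def)
qed

lemma null_vector_diagonal_congruence:
  fixes G B :: "real mat"
  assumes G: "G \<in> carrier_mat n n" and B: "B \<in> carrier_mat n n"
    and B_orth: "transpose_mat B * B = 1\<^sub>m n"
    and G_psd: "\<forall>y\<in>carrier_vec n. 0 \<le> y \<bullet> (G *\<^sub>v y)"
    and diag: "diagonal_mat (B * G * transpose_mat B)"
    and nonzero: "\<forall>i. m \<le> i \<and> i < n \<longrightarrow> (B * G * transpose_mat B) $$ (i, i) \<noteq> 0"
    and y: "y \<in> carrier_vec n" and "y \<bullet> (G *\<^sub>v y) = 0"
  obtains x where "x \<in> carrier_vec m" and "y = transpose_mat B *\<^sub>v zero_pad n m x"
proof -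
  define D where "D = B * G * transpose_mat B"
  have D: "D \<in> carrier_mat n n"
    using B G by (simp add: D_def)
  have D_quad: "z \<bullet> (D *\<^sub>v z) = (transpose_mat B *\<^sub>v z) \<bullet> (G *\<^sub>v (transpose_mat B *\<^sub>v z))"
    if "z \<in> carrier_vec n" for z
    unfolding D_def using B G that by (rule scalar_prod_congruence)
  have D_nonneg: "0 \<le> D $$ (i, i)" if "i < n" for i
  proof -
    have "D $$ (i, i) = unit_vec n i \<bullet> (D *\<^sub>v unit_vec n i)"
      using D that by simp
    also have "\<dots> \<ge> 0"
      using B that by (simp add: D_quad G_psd)
    finally show ?thesis .
  qed
  define z where "z = B *\<^sub>v y"
  have z: "z \<in> carrier_vec n" and y_eq: "y = transpose_mat B *\<^sub>v z"
    using B y transpose_mult_mat_vec_cancel[OF B B_orth y] by (simp_all add: z_def)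
  have "(\<Sum>i<n. D $$ (i, i) * (z $ i)\<^sup>2) = 0"
    using scalar_prod_diagonal_mat[OF D diag[folded D_def] z] D_quad[OF z] y_eq
      \<open>y \<bullet> (G *\<^sub>v y) = 0\<close> by simp
  then have D_z: "D $$ (i, i) * (z $ i)\<^sup>2 = 0" if "i < n" for i
    using that D_nonneg by (subst (asm) sum_nonneg_eq_0_iff) auto
  have "z $ i = 0" if "m \<le> i" "i < n" for i
  proof -
    have "D $$ (i, i) \<noteq> 0"
      using nonzero that by (simp add: D_def)
    then show ?thesis
      using D_z[of i] that by simp
  qed
  then have "z = zero_pad n m (vec m (\<lambda>i. z $ i))"
    using z by (auto simp: zero_pad_def vec_eq_iff)
  with y_eq show thesis
    by (intro that[of "vec m (\<lambda>i. z $ i)"]) auto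
qed

lemma zero_pad_null_vector_diagonal_congruence:
  fixes G B :: "real mat"
  assumes G: "G \<in> carrier_mat n n" and B: "B \<in> carrier_mat n n"
    and diag: "diagonal_mat (B * G * transpose_mat B)"
    and zero: "\<forall>i<m. (B * G * transpose_mat B) $$ (i, i) = 0"
  shows "(transpose_mat B *\<^sub>v zero_pad n m x) \<bullet> (G *\<^sub>v (transpose_mat B *\<^sub>v zero_pad n m x)) = 0"
proof -
  have "(transpose_mat B *\<^sub>v zero_pad n m x) \<bullet> (G *\<^sub>v (transpose_mat B *\<^sub>v zero_pad n m x))
      = zero_pad n m x \<bullet> ((B * G * transpose_mat B) *\<^sub>v zero_pad n m x)"
    by (rule scalar_prod_congruence[symmetric, OF B G zero_pad_carrier])
  also have "\<dots> = (\<Sum>i<n. (B * G * transpose_mat B) $$ (i, i) * (zero_pad n m x $ i)\<^sup>2)"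
    by (rule scalar_prod_diagonal_mat[OF _ diag zero_pad_carrier]) (use B G in simp)
  also have "\<dots> = 0"
    using zero by (intro sum.neutral) (auto simp: zero_pad_def)
  finally show ?thesis .
qed

lemma transpose_upper_left_congruence:
  fixes B R :: "real mat"
  assumes B: "B \<in> carrier_mat n n" and R: "R \<in> carrier_mat n n" and "transpose_mat R = R"
    and "m \<le> n"
  shows "transpose_mat (upper_left m (B * R * transpose_mat B)) = upper_left m (B * R * transpose_mat B)"
proof -
  have "B * R * transpose_mat B \<in> carrier_mat n n"
    using B R by simp
  with \<open>m \<le> n\<close> show ?thesis
    by (simp only: transpose_upper_left transpose_congruence[OF B R \<open>transpose_mat R = R\<close>])
qed

lemma min_gen_eigenvalue_le_constrained_quad:
  fixes F G H B :: "real mat" and m n :: nat and lam0 :: real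
  assumes F: "F \<in> carrier_mat n n" and G: "G \<in> carrier_mat n n" and H: "H \<in> carrier_mat n n"
    and "transpose_mat F = F" "transpose_mat H = H"
    and F_pos: "\<forall>y\<in>carrier_vec n. y \<noteq> 0\<^sub>v n \<longrightarrow> 0 < y \<bullet> (F *\<^sub>v y)"
    and G_psd: "\<forall>y\<in>carrier_vec n. 0 \<le> y \<bullet> (G *\<^sub>v y)"
    and B: "B \<in> carrier_mat n n"
    and B_orth: "transpose_mat B * B = 1\<^sub>m n" "B * transpose_mat B = 1\<^sub>m n"
    and diag: "diagonal_mat (B * G * transpose_mat B)"
    and nonzero: "\<forall>i. m \<le> i \<and> i < n \<longrightarrow> (B * G * transpose_mat B) $$ (i, i) \<noteq> 0"
    and "0 < m" "m \<le> n"
    and lam0_min: "\<forall>\<mu>. gen_eigenvalue m (upper_left m (B * H * transpose_mat B))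
      (upper_left m (B * F * transpose_mat B)) \<mu> \<longrightarrow> lam0 \<le> \<mu>"
    and y: "y \<in> carrier_vec n" "y \<bullet> (F *\<^sub>v y) = 1" "y \<bullet> (G *\<^sub>v y) = 0"
  shows "lam0 \<le> y \<bullet> (H *\<^sub>v y)"
proof -
  obtain x where x: "x \<in> carrier_vec m" and y_eq: "y = transpose_mat B *\<^sub>v zero_pad n m x"
    using null_vector_diagonal_congruence[OF G B B_orth(1) G_psd diag nonzero y(1,3)] by blast
  have "lam0 * (x \<bullet> (upper_left m (B * F * transpose_mat B) *\<^sub>v x))
      \<le> x \<bullet> (upper_left m (B * H * transpose_mat B) *\<^sub>v x)"
  proof (rule min_gen_eigenvalue_le_rayleigh_quotient[OF \<open>0 < m\<close> upper_left_carrier upper_left_carrier])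
    show "transpose_mat (upper_left m (B * H * transpose_mat B)) = upper_left m (B * H * transpose_mat B)"
      "transpose_mat (upper_left m (B * F * transpose_mat B)) = upper_left m (B * F * transpose_mat B)"
      using B F H \<open>m \<le> n\<close> \<open>transpose_mat F = F\<close> \<open>transpose_mat H = H\<close>
      by (simp_all only: transpose_upper_left_congruence)
    show "0 < z \<bullet> (upper_left m (B * F * transpose_mat B) *\<^sub>v z)"
      if "z \<in> carrier_vec m" "z \<noteq> 0\<^sub>v m" for z
      using F B B_orth(2) \<open>m \<le> n\<close> F_pos that by (rule pos_def_upper_left_congruence)
  qed (use lam0_min x in auto)
  then show ?thesis
    using y(2) x B F H \<open>m \<le> n\<close> by (simp add: y_eq scalar_prod_zero_pad_congruence)
qed

lemma constrained_quad_min_by_gen_eigenproblem: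
  fixes F G H B :: "real mat" and x0 :: "real vec" and m n :: nat and lam0 :: real
  defines "Ft \<equiv> upper_left m (B * F * transpose_mat B)"
    and "Ht \<equiv> upper_left m (B * H * transpose_mat B)"
    and "v0 \<equiv> transpose_mat B *\<^sub>v zero_pad n m x0"
  assumes F: "F \<in> carrier_mat n n" and G: "G \<in> carrier_mat n n" and H: "H \<in> carrier_mat n n"
    and "transpose_mat F = F" "transpose_mat H = H"
    and F_pos: "\<forall>y\<in>carrier_vec n. y \<noteq> 0\<^sub>v n \<longrightarrow> 0 < y \<bullet> (F *\<^sub>v y)"
    and G_psd: "\<forall>y\<in>carrier_vec n. 0 \<le> y \<bullet> (G *\<^sub>v y)"
    and B: "B \<in> carrier_mat n n"
    and B_orth: "transpose_mat B * B = 1\<^sub>m n" "B * transpose_mat B = 1\<^sub>m n"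
    and diag: "diagonal_mat (B * G * transpose_mat B)"
    and zero: "\<forall>i<m. (B * G * transpose_mat B) $$ (i, i) = 0"
    and nonzero: "\<forall>i. m \<le> i \<and> i < n \<longrightarrow> (B * G * transpose_mat B) $$ (i, i) \<noteq> 0"
    and "m \<le> n"
    and lam0_min: "\<forall>\<mu>. gen_eigenvalue m Ht Ft \<mu> \<longrightarrow> lam0 \<le> \<mu>"
    and x0: "x0 \<in> carrier_vec m" "x0 \<noteq> 0\<^sub>v m"
    and x0_eig: "Ht *\<^sub>v x0 = lam0 \<cdot>\<^sub>v (Ft *\<^sub>v x0)"
    and x0_norm: "x0 \<bullet> (Ft *\<^sub>v x0) = 1"
  shows "v0 \<bullet> (F *\<^sub>v v0) = 1" and "v0 \<bullet> (G *\<^sub>v v0) = 0" and "v0 \<bullet> (H *\<^sub>v v0) = lam0"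
    and "\<forall>y\<in>carrier_vec n. y \<bullet> (F *\<^sub>v y) = 1 \<longrightarrow> y \<bullet> (G *\<^sub>v y) = 0 \<longrightarrow> lam0 \<le> y \<bullet> (H *\<^sub>v y)"
proof -
  have quad: "v0 \<bullet> (R *\<^sub>v v0) = x0 \<bullet> (upper_left m (B * R * transpose_mat B) *\<^sub>v x0)"
    if "R \<in> carrier_mat n n" for R
    unfolding v0_def using B that x0(1) \<open>m \<le> n\<close> by (rule scalar_prod_zero_pad_congruence)
  show "v0 \<bullet> (F *\<^sub>v v0) = 1"
    using quad[OF F] x0_norm by (simp add: Ft_def)
  show "v0 \<bullet> (G *\<^sub>v v0) = 0"
    unfolding v0_def using G B diag zero by (rule zero_pad_null_vector_diagonal_congruence)
  have "x0 \<bullet> (Ht *\<^sub>v x0) = lam0 * (x0 \<bullet> (Ft *\<^sub>v x0))"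
    unfolding x0_eig using x0(1) by (intro scalar_prod_smult_right) (simp add: Ft_def upper_left_def)
  then show "v0 \<bullet> (H *\<^sub>v v0) = lam0"
    using quad[OF H] x0_norm by (simp add: Ht_def)
  have "0 < m"
    using x0 by (auto simp: vec_eq_iff)
  then show "\<forall>y\<in>carrier_vec n. y \<bullet> (F *\<^sub>v y) = 1 \<longrightarrow> y \<bullet> (G *\<^sub>v y) = 0 \<longrightarrow> lam0 \<le> y \<bullet> (H *\<^sub>v y)"
    using min_gen_eigenvalue_le_constrained_quad[OF F G H \<open>transpose_mat F = F\<close> \<open>transpose_mat H = H\<close>
        F_pos G_psd B B_orth diag nonzero _ \<open>m \<le> n\<close> lam0_min[unfolded Ft_def Ht_def]]
    by blast
qed

lemma kernel_dim_le_dim_col: "kernel_dim A \<le> dim_col A"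
  by (simp add: kernel_dim_code)

section \<open>Diagonal operators and Gram matrices\<close>

definition real_diag_mat :: "nat \<Rightarrow> (nat \<Rightarrow> real) \<Rightarrow> complex mat" where
  "real_diag_mat N d = mat N N (\<lambda>(i, j). if i = j then complex_of_real (d i) else 0)"

lemma real_diag_mat_carrier [simp]: "real_diag_mat N d \<in> carrier_mat N N"
  by (simp add: real_diag_mat_def)

lemma real_diag_mat_mult_vec_nth:
  assumes "z \<in> carrier_vec N" and "p < N"
  shows "(real_diag_mat N d *\<^sub>v z) $ p = complex_of_real (d p) * z $ p"
proof -
  have "(real_diag_mat N d *\<^sub>v z) $ p
      = (\<Sum>q<N. (if p = q then complex_of_real (d p) else 0) * z $ q)"
    using assms by (simp add: real_diag_mat_def scalar_prod_def atLeast0LessThan)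
  also have "\<dots> = (\<Sum>q<N. if p = q then complex_of_real (d p) * z $ q else 0)"
    by (intro sum.cong) auto
  also have "\<dots> = complex_of_real (d p) * z $ p"
    using \<open>p < N\<close> by simp
  finally show ?thesis .
qed

lemma adj_carrier [simp]: "A \<in> carrier_mat N N \<Longrightarrow> adj A \<in> carrier_mat N N"
  by (simp add: adj_def)

lemma braket_adj_real_diag_mult:
  assumes P: "P \<in> carrier_mat N N" and Q: "Q \<in> carrier_mat N N" and v: "v \<in> carrier_vec N"
  shows "braket v (adj P * real_diag_mat N d * Q) v
    = (\<Sum>p<N. complex_of_real (d p) * cnj ((P *\<^sub>v v) $ p) * (Q *\<^sub>v v) $ p)"
proof -
  define y where "y = real_diag_mat N d *\<^sub>v (Q *\<^sub>v v)"
  have y: "y \<in> carrier_vec N"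
    unfolding y_def by (rule mult_mat_vec_carrier[OF real_diag_mat_carrier]) (use Q v in simp)
  have "(adj P * real_diag_mat N d * Q) *\<^sub>v v = (adj P * real_diag_mat N d) *\<^sub>v (Q *\<^sub>v v)"
    using P Q v
    by (intro assoc_mult_mat_vec[OF mult_carrier_mat[OF adj_carrier[OF P] real_diag_mat_carrier]]) auto
  also have "\<dots> = adj P *\<^sub>v y"
    unfolding y_def
    by (rule assoc_mult_mat_vec[OF adj_carrier[OF P] real_diag_mat_carrier mult_mat_vec_carrier[OF Q v]])
  finally have "braket v (adj P * real_diag_mat N d * Q) v
      = (\<Sum>i<N. cnj (v $ i) * (\<Sum>p<N. cnj (P $$ (p, i)) * y $ p))"
    using P v y by (simp add: braket_def adj_def scalar_prod_def atLeast0LessThan)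
  also have "\<dots> = (\<Sum>i<N. \<Sum>p<N. y $ p * (cnj (P $$ (p, i)) * cnj (v $ i)))"
    by (simp add: sum_distrib_left mult_ac)
  also have "\<dots> = (\<Sum>p<N. \<Sum>i<N. y $ p * (cnj (P $$ (p, i)) * cnj (v $ i)))"
    by (rule sum.swap)
  also have "\<dots> = (\<Sum>p<N. y $ p * cnj (\<Sum>i<N. P $$ (p, i) * v $ i))"
    by (simp add: sum_distrib_left)
  also have "\<dots> = (\<Sum>p<N. complex_of_real (d p) * cnj ((P *\<^sub>v v) $ p) * (Q *\<^sub>v v) $ p)"
    using P Q v by (intro sum.cong refl)
      (simp add: y_def real_diag_mat_mult_vec_nth scalar_prod_def atLeast0LessThan)
  finally show ?thesis .
qed

definition weighted_norm_sq :: "nat \<Rightarrow> (nat \<Rightarrow> real) \<Rightarrow> complex vec \<Rightarrow> real" where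
  "weighted_norm_sq N d z = (\<Sum>p<N. d p * (cmod (z $ p))\<^sup>2)"

lemma weighted_norm_sq_nonneg: "(\<And>p. p < N \<Longrightarrow> 0 \<le> d p) \<Longrightarrow> 0 \<le> weighted_norm_sq N d z"
  unfolding weighted_norm_sq_def by (intro sum_nonneg) auto

lemma braket_adj_real_diag_mult_self:
  assumes M: "M \<in> carrier_mat N N" and v: "v \<in> carrier_vec N"
  shows "braket v (adj M * real_diag_mat N d * M) v = complex_of_real (weighted_norm_sq N d (M *\<^sub>v v))"
proof -
  have term_eq: "complex_of_real r * cnj s * s = complex_of_real (r * (cmod s)\<^sup>2)" for r s
    by (simp only: of_real_mult complex_norm_square mult.assoc mult.commute[of "cnj s"])
  have "braket v (adj M * real_diag_mat N d * M) v
      = (\<Sum>p<N. complex_of_real (d p) * cnj ((M *\<^sub>v v) $ p) * (M *\<^sub>v v) $ p)"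
    by (rule braket_adj_real_diag_mult[OF M M v])
  also have "\<dots> = complex_of_real (weighted_norm_sq N d (M *\<^sub>v v))"
    by (simp only: term_eq weighted_norm_sq_def of_real_sum)
  finally show ?thesis .
qed

lemma Mop_carrier [simp]: "Mop N l U \<alpha> \<in> carrier_mat N N"
  by (simp add: Mop_def)

lemma Mop_mult_vec_nth:
  assumes U: "\<forall>j<l. U j \<in> carrier_mat N N" and v: "v \<in> carrier_vec N" and "p < N"
  shows "(Mop N l U \<alpha> *\<^sub>v v) $ p = (\<Sum>j<l. \<alpha> $ j * (U j *\<^sub>v v) $ p)"
proof -
  have "(Mop N l U \<alpha> *\<^sub>v v) $ p = (\<Sum>r<N. \<Sum>j<l. \<alpha> $ j * (U j $$ (p, r) * v $ r))"
    using \<open>p < N\<close> v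
    by (simp add: Mop_def scalar_prod_def atLeast0LessThan sum_distrib_right mult.assoc)
  also have "\<dots> = (\<Sum>j<l. \<alpha> $ j * (\<Sum>r<N. U j $$ (p, r) * v $ r))"
    by (subst sum.swap) (simp add: sum_distrib_left)
  also have "\<dots> = (\<Sum>j<l. \<alpha> $ j * (U j *\<^sub>v v) $ p)"
  proof (intro sum.cong refl)
    fix j assume "j \<in> {..<l}"
    then have "U j \<in> carrier_mat N N" by (simp add: U)
    then show "\<alpha> $ j * (\<Sum>r<N. U j $$ (p, r) * v $ r) = \<alpha> $ j * (U j *\<^sub>v v) $ p"
      using v \<open>p < N\<close> by (simp add: scalar_prod_def atLeast0LessThan)
  qed
  finally show ?thesis .
qed

lemma gram_carrier [simp]: "gram l U v A \<in> carrier_mat l l"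
  by (simp add: gram_def)

lemma gram_real_diag_nth:
  assumes "\<forall>j<l. U j \<in> carrier_mat N N" and "v \<in> carrier_vec N"
    and "j < l" and "k < l"
  shows "gram l U v (real_diag_mat N d) $$ (j, k)
    = (\<Sum>p<N. complex_of_real (d p) * cnj ((U j *\<^sub>v v) $ p) * (U k *\<^sub>v v) $ p)"
  using assms by (simp add: gram_def braket_adj_real_diag_mult)

lemma gram_real_diag_hermitian:
  assumes "\<forall>j<l. U j \<in> carrier_mat N N" and "v \<in> carrier_vec N"
    and "j < l" and "k < l"
  shows "gram l U v (real_diag_mat N d) $$ (k, j) = cnj (gram l U v (real_diag_mat N d) $$ (j, k))"
proof -
  have "cnj (complex_of_real r * cnj a * b) = complex_of_real r * cnj b * a" for r a b
    by (simp add: mult.commute)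
  then show ?thesis
    using assms by (simp only: gram_real_diag_nth cnj_sum)
qed

lemma one_mat_eq_real_diag_mat: "1\<^sub>m N = real_diag_mat N (\<lambda>_. 1)"
  by (intro eq_matI) (auto simp: real_diag_mat_def)

lemma one_minus_proj_op_eq_real_diag_mat:
  "1\<^sub>m N - proj_op N S = real_diag_mat N (\<lambda>i. if i \<in> S then 0 else 1)"
  by (intro eq_matI) (auto simp: real_diag_mat_def proj_op_def)

lemma cost_op_eq_real_diag_mat: "cost_op N c = real_diag_mat N c"
  by (simp add: cost_op_def real_diag_mat_def)

section \<open>Realification\<close>

definition complexify_vec :: "nat \<Rightarrow> real vec \<Rightarrow> complex vec" where
  "complexify_vec l y = vec l (\<lambda>j. complex_of_real (y $ j) + \<i> * complex_of_real (y $ (j + l)))"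

definition realify_vec :: "nat \<Rightarrow> complex vec \<Rightarrow> real vec" where
  "realify_vec l a = vec (2 * l) (\<lambda>i. if i < l then Re (a $ i) else Im (a $ (i - l)))"

lemma realify_vec_carrier [simp]: "realify_vec l a \<in> carrier_vec (2 * l)"
  by (simp add: realify_vec_def)

lemma complexify_vec_carrier [simp]: "complexify_vec l y \<in> carrier_vec l"
  by (simp add: complexify_vec_def)

lemma complexify_realify_vec: "a \<in> carrier_vec l \<Longrightarrow> complexify_vec l (realify_vec l a) = a"
  by (intro eq_vecI) (auto simp: complexify_vec_def realify_vec_def complex_eq_iff)

lemma complexify_vec_eq_0_iff:
  assumes "y \<in> carrier_vec (2 * l)"
  shows "complexify_vec l y = 0\<^sub>v l \<longleftrightarrow> y = 0\<^sub>v (2 * l)"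
proof
  assume zero: "complexify_vec l y = 0\<^sub>v l"
  have y_lo_hi: "y $ j = 0 \<and> y $ (j + l) = 0" if "j < l" for j
  proof -
    have "complexify_vec l y $ j = 0"
      using zero that by simp
    then show ?thesis
      using that by (simp add: complexify_vec_def complex_eq_iff)
  qed
  have "y $ i = 0" if "i < 2 * l" for i
  proof (cases "i < l")
    case True
    then show ?thesis using y_lo_hi by blast
  next
    case False
    then show ?thesis using y_lo_hi[of "i - l"] that by simp
  qed
  then show "y = 0\<^sub>v (2 * l)"
    using assms by (intro eq_vecI) auto
next
  assume "y = 0\<^sub>v (2 * l)"
  then show "complexify_vec l y = 0\<^sub>v l"
    by (intro eq_vecI) (simp_all add: complexify_vec_def)
qed

lemma realify_carrier [simp]: "X \<in> carrier_mat l l \<Longrightarrow> realify X \<in> carrier_mat (2 * l) (2 * l)"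
  by (simp add: realify_def mult_2)

lemma realify_symmetric:
  assumes X: "X \<in> carrier_mat l l"
    and herm: "\<And>j k. j < l \<Longrightarrow> k < l \<Longrightarrow> X $$ (k, j) = cnj (X $$ (j, k))"
  shows "transpose_mat (realify X) = realify X"
proof (rule eq_matI)
  show "dim_row (transpose_mat (realify X)) = dim_row (realify X)"
    "dim_col (transpose_mat (realify X)) = dim_col (realify X)"
    using X by (auto simp: realify_def)
  fix i k assume "i < dim_row (realify X)" and "k < dim_col (realify X)"
  then have i: "i < 2 * l" and k: "k < 2 * l"
    using X by (auto simp: realify_def)
  show "transpose_mat (realify X) $$ (i, k) = realify X $$ (i, k)"
  proof (cases "i < l"; cases "k < l")
    assume "i < l" "k < l"
    then show ?thesis using X herm[of i k] by (simp add: realify_def)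
  next
    assume "i < l" "\<not> k < l"
    then show ?thesis using X herm[of i "k - l"] k by (simp add: realify_def)
  next
    assume "\<not> i < l" "k < l"
    then show ?thesis using X herm[of "i - l" k] i by (simp add: realify_def)
  next
    assume "\<not> i < l" "\<not> k < l"
    then show ?thesis using X herm[of "i - l" "k - l"] i k by (simp add: realify_def)
  qed
qed

lemma sum_lessThan_double:
  fixes f :: "nat \<Rightarrow> 'a::comm_monoid_add"
  shows "(\<Sum>i<2 * l. f i) = (\<Sum>i<l. f i) + (\<Sum>i<l. f (i + l))"
proof -
  have "(\<Sum>i<2 * l. f i) = sum f {0..<l} + sum f {l..<l + l}"
    by (simp add: atLeast0LessThan[symmetric] mult_2 sum.atLeastLessThan_concat)
  also have "sum f {l..<l + l} = (\<Sum>i<l. f (i + l))"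
    using sum.shift_bounds_nat_ivl[of f 0 l l] by (simp add: atLeast0LessThan)
  finally show ?thesis
    by (simp add: atLeast0LessThan)
qed

lemma realify_quad:
  assumes X: "X \<in> carrier_mat l l" and y: "y \<in> carrier_vec (2 * l)"
  shows "y \<bullet> (realify X *\<^sub>v y)
    = (\<Sum>j<l. \<Sum>k<l. Re (cnj (complexify_vec l y $ j) * complexify_vec l y $ k * X $$ (j, k)))"
proof -
  define R where "R = realify X"
  have R: "R \<in> carrier_mat (2 * l) (2 * l)"
    using X by (simp add: R_def)
  have "y \<bullet> (R *\<^sub>v y) = (\<Sum>i<2 * l. \<Sum>k<2 * l. y $ i * R $$ (i, k) * y $ k)"
    using R y by (simp add: scalar_prod_def sum_distrib_left mult.assoc atLeast0LessThan)
  also have "\<dots> = (\<Sum>i<l. \<Sum>k<l. y $ i * R $$ (i, k) * y $ k + y $ i * R $$ (i, k + l) * y $ (k + l)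
      + y $ (i + l) * R $$ (i + l, k) * y $ k + y $ (i + l) * R $$ (i + l, k + l) * y $ (k + l))"
    by (simp add: sum_lessThan_double sum.distrib add_ac)
  also have "\<dots> = (\<Sum>j<l. \<Sum>k<l. Re (cnj (complexify_vec l y $ j) * complexify_vec l y $ k * X $$ (j, k)))"
  proof (intro sum.cong refl)
    fix i k assume "i \<in> {..<l}" and "k \<in> {..<l}"
    moreover have "R $$ (i, k) = Re (X $$ (i, k))" "R $$ (i, k + l) = - Im (X $$ (i, k))"
      "R $$ (i + l, k) = Im (X $$ (i, k))" "R $$ (i + l, k + l) = Re (X $$ (i, k))"
      using \<open>i \<in> {..<l}\<close> \<open>k \<in> {..<l}\<close> X by (auto simp: R_def realify_def)
    ultimately show "y $ i * R $$ (i, k) * y $ k + y $ i * R $$ (i, k + l) * y $ (k + l)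
      + y $ (i + l) * R $$ (i + l, k) * y $ k + y $ (i + l) * R $$ (i + l, k + l) * y $ (k + l)
      = Re (cnj (complexify_vec l y $ i) * complexify_vec l y $ k * X $$ (i, k))"
      by (simp add: complexify_vec_def algebra_simps)
  qed
  finally show ?thesis
    by (simp add: R_def)
qed

lemma realify_gram_real_diag_quad:
  assumes U: "\<forall>j<l. U j \<in> carrier_mat N N" and v: "v \<in> carrier_vec N"
    and y: "y \<in> carrier_vec (2 * l)"
  shows "y \<bullet> (realify (gram l U v (real_diag_mat N d)) *\<^sub>v y)
    = weighted_norm_sq N d (Mop N l U (complexify_vec l y) *\<^sub>v v)"
proof -
  define a where "a = complexify_vec l y"
  define w where "w j = U j *\<^sub>v v" for j
  define F where "F p k j = cnj (a $ j) * a $ k * (complex_of_real (d p) * cnj (w j $ p) * w k $ p)"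
    for p k j
  have norm_eq: "complex_of_real (d p * (cmod (\<Sum>j<l. a $ j * w j $ p))\<^sup>2) = (\<Sum>j<l. \<Sum>k<l. F p k j)"
    for p
    by (simp only: of_real_mult complex_norm_square)
      (simp add: F_def sum_distrib_left sum_distrib_right mult_ac)
  have "weighted_norm_sq N d (Mop N l U a *\<^sub>v v) = (\<Sum>p<N. d p * (cmod (\<Sum>j<l. a $ j * w j $ p))\<^sup>2)"
    using U v by (simp add: weighted_norm_sq_def Mop_mult_vec_nth w_def)
  then have "complex_of_real (weighted_norm_sq N d (Mop N l U a *\<^sub>v v))
      = (\<Sum>p<N. \<Sum>j<l. \<Sum>k<l. F p k j)"
    by (simp only: of_real_sum norm_eq)
  also have "\<dots> = (\<Sum>j<l. \<Sum>p<N. \<Sum>k<l. F p k j)"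
    by (rule sum.swap)
  also have "\<dots> = (\<Sum>j<l. \<Sum>k<l. \<Sum>p<N. F p k j)"
    by (intro sum.cong refl sum.swap)
  also have "\<dots> = (\<Sum>j<l. \<Sum>k<l. cnj (a $ j) * a $ k * gram l U v (real_diag_mat N d) $$ (j, k))"
    using U v by (intro sum.cong refl) (simp add: F_def w_def gram_real_diag_nth sum_distrib_left)
  finally have "weighted_norm_sq N d (Mop N l U a *\<^sub>v v)
      = Re (\<Sum>j<l. \<Sum>k<l. cnj (a $ j) * a $ k * gram l U v (real_diag_mat N d) $$ (j, k))"
    by (metis Re_complex_of_real)
  then show ?thesis
    unfolding realify_quad[OF gram_carrier y] a_def by (simp only: Re_sum)
qed

lemma braket_Mop_complexify_vec:
  assumes "\<forall>j<l. U j \<in> carrier_mat N N" and "v \<in> carrier_vec N"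
    and "y \<in> carrier_vec (2 * l)"
  shows "braket v (adj (Mop N l U (complexify_vec l y)) * real_diag_mat N d * Mop N l U (complexify_vec l y)) v
    = complex_of_real (y \<bullet> (realify (gram l U v (real_diag_mat N d)) *\<^sub>v y))"
  using assms by (simp add: braket_adj_real_diag_mult_self realify_gram_real_diag_quad)

lemma feasible_complexify_vec_iff:
  assumes U: "\<forall>j<l. U j \<in> carrier_mat N N" and v: "v \<in> carrier_vec N"
    and y: "y \<in> carrier_vec (2 * l)"
  shows "feasible N l S U v (complexify_vec l y) \<longleftrightarrow>
    y \<bullet> (realify (gram l U v (1\<^sub>m N)) *\<^sub>v y) = 1 \<and>
    y \<bullet> (realify (gram l U v (1\<^sub>m N - proj_op N S)) *\<^sub>v y) = 0"
proof -
  let ?M = "Mop N l U (complexify_vec l y)"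
  have "adj ?M * ?M = adj ?M * real_diag_mat N (\<lambda>_. 1) * ?M"
    by (simp add: right_mult_one_mat[OF adj_carrier[OF Mop_carrier]] one_mat_eq_real_diag_mat[symmetric])
  then show ?thesis
    unfolding feasible_def one_minus_proj_op_eq_real_diag_mat unfolding one_mat_eq_real_diag_mat
    by (simp add: braket_Mop_complexify_vec[OF U v y])
qed

lemma objective_complexify_vec:
  assumes "\<forall>j<l. U j \<in> carrier_mat N N" and "v \<in> carrier_vec N"
    and "y \<in> carrier_vec (2 * l)"
  shows "objective N l c U v (complexify_vec l y)
    = complex_of_real (y \<bullet> (realify (gram l U v (cost_op N c)) *\<^sub>v y))"
  unfolding objective_def cost_op_eq_real_diag_mat using assms by (rule braket_Mop_complexify_vec)

lemma realify_gram_real_diag_symmetric: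
  assumes "\<forall>j<l. U j \<in> carrier_mat N N" and "v \<in> carrier_vec N"
  shows "transpose_mat (realify (gram l U v (real_diag_mat N d))) = realify (gram l U v (real_diag_mat N d))"
  using gram_carrier gram_real_diag_hermitian[OF assms] by (rule realify_symmetric)

lemma realify_gram_real_diag_psd:
  assumes "\<forall>j<l. U j \<in> carrier_mat N N" and "v \<in> carrier_vec N"
    and "y \<in> carrier_vec (2 * l)" and "\<And>p. p < N \<Longrightarrow> 0 \<le> d p"
  shows "0 \<le> y \<bullet> (realify (gram l U v (real_diag_mat N d)) *\<^sub>v y)"
  using assms by (simp add: realify_gram_real_diag_quad weighted_norm_sq_nonneg)

lemma realify_gram_one_pos_def:
  assumes U: "\<forall>j<l. U j \<in> carrier_mat N N" and v: "v \<in> carrier_vec N"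
    and indep: "lin_indep_family N (\<lambda>j. U j *\<^sub>v v) l"
    and y: "y \<in> carrier_vec (2 * l)" and "y \<noteq> 0\<^sub>v (2 * l)"
  shows "0 < y \<bullet> (realify (gram l U v (1\<^sub>m N)) *\<^sub>v y)"
proof -
  define a where "a = complexify_vec l y"
  have "a \<noteq> 0\<^sub>v l"
    using y \<open>y \<noteq> 0\<^sub>v (2 * l)\<close> by (simp add: a_def complexify_vec_eq_0_iff)
  then have "\<exists>j<l. a $ j \<noteq> 0"
    by (auto simp: vec_eq_iff a_def)
  then obtain p where "p < N" and "(\<Sum>j<l. a $ j * (U j *\<^sub>v v) $ p) \<noteq> 0"
    using indep unfolding lin_indep_family_def by blast
  then have "0 < (cmod ((Mop N l U a *\<^sub>v v) $ p))\<^sup>2"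
    by (simp add: Mop_mult_vec_nth[OF U v])
  also have "\<dots> \<le> (\<Sum>q<N. (cmod ((Mop N l U a *\<^sub>v v) $ q))\<^sup>2)"
    using \<open>p < N\<close> by (intro member_le_sum[where f = "\<lambda>q. (cmod ((Mop N l U a *\<^sub>v v) $ q))\<^sup>2"]) auto
  also have "\<dots> = weighted_norm_sq N (\<lambda>_. 1) (Mop N l U a *\<^sub>v v)"
    by (simp add: weighted_norm_sq_def)
  also have "\<dots> = y \<bullet> (realify (gram l U v (1\<^sub>m N)) *\<^sub>v y)"
    unfolding one_mat_eq_real_diag_mat a_def using U v y by (rule realify_gram_real_diag_quad[symmetric])
  finally show ?thesis .
qed

lemma realify_gram_problem_matrices:
  fixes U :: "nat \<Rightarrow> complex mat" and v :: "complex vec" and N l :: nat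
    and S :: "nat set" and c :: "nat \<Rightarrow> real"
  defines "F \<equiv> realify (gram l U v (1\<^sub>m N))"
    and "G \<equiv> realify (gram l U v (1\<^sub>m N - proj_op N S))"
    and "H \<equiv> realify (gram l U v (cost_op N c))"
  assumes U: "\<forall>j<l. U j \<in> carrier_mat N N" and v: "v \<in> carrier_vec N"
    and indep: "lin_indep_family N (\<lambda>j. U j *\<^sub>v v) l"
  shows "F \<in> carrier_mat (2 * l) (2 * l)" and "G \<in> carrier_mat (2 * l) (2 * l)"
    and "H \<in> carrier_mat (2 * l) (2 * l)"
    and "transpose_mat F = F" and "transpose_mat H = H"
    and "\<forall>y\<in>carrier_vec (2 * l). y \<noteq> 0\<^sub>v (2 * l) \<longrightarrow> 0 < y \<bullet> (F *\<^sub>v y)"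
    and "\<forall>y\<in>carrier_vec (2 * l). 0 \<le> y \<bullet> (G *\<^sub>v y)"
proof -
  show "F \<in> carrier_mat (2 * l) (2 * l)" "G \<in> carrier_mat (2 * l) (2 * l)"
    "H \<in> carrier_mat (2 * l) (2 * l)"
    by (simp_all add: F_def G_def H_def)
  show "transpose_mat F = F"
    unfolding F_def one_mat_eq_real_diag_mat using U v by (rule realify_gram_real_diag_symmetric)
  show "transpose_mat H = H"
    unfolding H_def cost_op_eq_real_diag_mat using U v by (rule realify_gram_real_diag_symmetric)
  show "\<forall>y\<in>carrier_vec (2 * l). y \<noteq> 0\<^sub>v (2 * l) \<longrightarrow> 0 < y \<bullet> (F *\<^sub>v y)"
    unfolding F_def using realify_gram_one_pos_def[OF U v indep] by blast
  show "\<forall>y\<in>carrier_vec (2 * l). 0 \<le> y \<bullet> (G *\<^sub>v y)"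
    unfolding G_def one_minus_proj_op_eq_real_diag_mat using realify_gram_real_diag_psd[OF U v] by simp
qed

lemma minimizer_of_realified_problem:
  fixes U :: "nat \<Rightarrow> complex mat" and v :: "complex vec" and y0 :: "real vec" and N l :: nat
    and S :: "nat set" and c :: "nat \<Rightarrow> real" and lam0 :: real
  defines "F \<equiv> realify (gram l U v (1\<^sub>m N))"
    and "G \<equiv> realify (gram l U v (1\<^sub>m N - proj_op N S))"
    and "H \<equiv> realify (gram l U v (cost_op N c))"
  assumes U: "\<forall>j<l. U j \<in> carrier_mat N N" and v: "v \<in> carrier_vec N"
    and y0: "y0 \<in> carrier_vec (2 * l)"
    and y0_feasible: "y0 \<bullet> (F *\<^sub>v y0) = 1" "y0 \<bullet> (G *\<^sub>v y0) = 0"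
    and y0_value: "y0 \<bullet> (H *\<^sub>v y0) = lam0"
    and y0_min: "\<forall>y\<in>carrier_vec (2 * l). y \<bullet> (F *\<^sub>v y) = 1 \<longrightarrow> y \<bullet> (G *\<^sub>v y) = 0 \<longrightarrow>
      lam0 \<le> y \<bullet> (H *\<^sub>v y)"
  shows "feasible N l S U v (complexify_vec l y0)
     \<and> objective N l c U v (complexify_vec l y0) = complex_of_real lam0
     \<and> (\<forall>\<alpha>. feasible N l S U v \<alpha> \<longrightarrow>
          objective N l c U v \<alpha> \<in> \<real> \<and> lam0 \<le> Re (objective N l c U v \<alpha>))"
proof (intro conjI allI impI)
  show "feasible N l S U v (complexify_vec l y0)"
    using y0_feasible by (simp add: feasible_complexify_vec_iff[OF U v y0] F_def G_def)
  show "objective N l c U v (complexify_vec l y0) = complex_of_real lam0"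
    using y0_value by (simp add: objective_complexify_vec[OF U v y0] H_def)
  fix \<alpha> assume feasible: "feasible N l S U v \<alpha>"
  define y where "y = realify_vec l \<alpha>"
  have y: "y \<in> carrier_vec (2 * l)"
    by (simp add: y_def)
  have \<alpha>: "complexify_vec l y = \<alpha>"
    using feasible by (simp add: y_def feasible_def complexify_realify_vec)
  have "lam0 \<le> y \<bullet> (H *\<^sub>v y)"
    using feasible y0_min y feasible_complexify_vec_iff[OF U v y] by (simp add: \<alpha> F_def G_def)
  moreover have "objective N l c U v \<alpha> = complex_of_real (y \<bullet> (H *\<^sub>v y))"
    using objective_complexify_vec[OF U v y] by (simp add: \<alpha> H_def)
  ultimately show "objective N l c U v \<alpha> \<in> \<real>" "lam0 \<le> Re (objective N l c U v \<alpha>)"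
    by simp_all
qed

theorem theorem1:
  fixes n l m :: nat
    and c :: "nat \<Rightarrow> real" and S :: "nat set"
    and iota :: "complex vec" and U :: "nat \<Rightarrow> complex mat"
    and B :: "real mat" and lam0 :: real and x0 :: "real vec"
  defines "N \<equiv> 2 ^ n"
  defines "Fc \<equiv> gram l U iota (1\<^sub>m N)"
    and "Gc \<equiv> gram l U iota (1\<^sub>m N - proj_op N S)"
    and "Hc \<equiv> gram l U iota (cost_op N c)"
  defines "Fr \<equiv> realify Fc" and "Gr \<equiv> realify Gc" and "Hr \<equiv> realify Hc"
  defines "Ft \<equiv> upper_left m (B * Fr * transpose_mat B)"
    and "Ht \<equiv> upper_left m (B * Hr * transpose_mat B)"
  defines "v0 \<equiv> transpose_mat B *\<^sub>v vec (2 * l) (\<lambda>i. if i < m then x0 $ i else 0)"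
  defines "alpha0 \<equiv> vec l (\<lambda>j. complex_of_real (v0 $ j) + \<i> * complex_of_real (v0 $ (j + l)))"
  assumes S_sub: "S \<subseteq> {..<N}"
    and iota_car: "iota \<in> carrier_vec N"
    and iota_in_HS: "\<forall>i<N. i \<notin> S \<longrightarrow> iota $ i = 0"
    and iota_unit: "(\<Sum>i<N. (cmod (iota $ i))\<^sup>2) = 1"
    and l_pos: "l \<ge> 1"
    and U_unitary: "\<forall>j<l. unitary_mat N (U j)"
    and U_last: "U (l - 1) = 1\<^sub>m N"
    and U_indep: "lin_indep_family N (\<lambda>j. U j *\<^sub>v iota) l"
    and m_def: "m = kernel_dim Gr"
    and B_car: "B \<in> carrier_mat (2 * l) (2 * l)"
    and B_orth: "transpose_mat B * B = 1\<^sub>m (2 * l)" "B * transpose_mat B = 1\<^sub>m (2 * l)"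
    and B_diag: "diagonal_mat (B * Gr * transpose_mat B)"
    and B_zero: "\<forall>i<m. (B * Gr * transpose_mat B) $$ (i, i) = 0"
    and B_nonzero: "\<forall>i. m \<le> i \<and> i < 2 * l \<longrightarrow> (B * Gr * transpose_mat B) $$ (i, i) \<noteq> 0"
    and lam0_eig: "gen_eigenvalue m Ht Ft lam0"
    and lam0_min: "\<forall>mu. gen_eigenvalue m Ht Ft mu \<longrightarrow> lam0 \<le> mu"
    and x0_car: "x0 \<in> carrier_vec m" and x0_nz: "x0 \<noteq> 0\<^sub>v m"
    and x0_eig: "Ht *\<^sub>v x0 = lam0 \<cdot>\<^sub>v (Ft *\<^sub>v x0)"
    and x0_norm: "x0 \<bullet> (Ft *\<^sub>v x0) = 1"
  shows "feasible N l S U iota alpha0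
     \<and> objective N l c U iota alpha0 = complex_of_real lam0
     \<and> (\<forall>alpha. feasible N l S U iota alpha \<longrightarrow> objective N l c U iota alpha \<in> \<real> \<and> lam0 \<le> Re (objective N l c U iota alpha))"
proof -
  have U: "\<forall>j<l. U j \<in> carrier_mat N N"
    using U_unitary by (simp add: unitary_mat_def)
  note defs = Ft_def Ht_def Fr_def Gr_def Hr_def Fc_def Gc_def Hc_def
  have "Gr \<in> carrier_mat (2 * l) (2 * l)"
    by (simp add: Gr_def Gc_def)
  then have "m \<le> 2 * l"
    using kernel_dim_le_dim_col[of Gr] by (simp add: m_def)
  have v0: "v0 = transpose_mat B *\<^sub>v zero_pad (2 * l) m x0"
    by (simp add: v0_def zero_pad_def)
  have alpha0: "alpha0 = complexify_vec l v0"
    by (simp add: alpha0_def complexify_vec_def)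
  note real_optimum = constrained_quad_min_by_gen_eigenproblem[OF
      realify_gram_problem_matrices[OF U iota_car U_indep] B_car B_orth
      B_diag[unfolded defs] B_zero[unfolded defs] B_nonzero[unfolded defs] \<open>m \<le> 2 * l\<close>
      lam0_min[unfolded defs] x0_car x0_nz x0_eig[unfolded defs] x0_norm[unfolded defs], folded v0]
  have "v0 \<in> carrier_vec (2 * l)"
    using B_car by (simp add: v0_def)
  then show ?thesis
    unfolding alpha0 using U iota_car real_optimum by (intro minimizer_of_realified_problem)
qed

end
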